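(* Let $k$ be a positive integer. For every integer $n\ge1$, $$D_k^e(n)-D_k^o(n)=\begin{cases}(-1)^m, & \text{if } 1\le n=\tfrac12 m(3m\pm1)\le k-1 \text{ for some integer } m,\\ P_e^{(k)}(d,n)-P_o^{(k)}(d,n), & \text{if } k-1<n\le \tfrac12 k(k-1),\\ 0,&\text{otherwise.}\end{cases}$$
   Context: $D_k(n)$ is the number of partitions of $n$ into non-negative parts (the part $0$ is allowed) in which the smallest part appears exactly $k$ times and no other part is repeated. $D_k^e(n)$ (resp. $D_k^o(n)$) is the number of such partitions in which the number of parts greater than the smallest part is even (resp. odd). $P_e^{(k)}(d,n)$ (resp. $P_o^{(k)}(d,n)$) is the number of partitions of $n$ into an even (resp. odd) number of distinct positive parts, none exceeding $k-1$. *)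

theory Defs
  imports Main "HOL-Library.Multiset"
begin

(* Partitions of n into non-negative parts (0 allowed), as multisets of naturals,
   in which the smallest part appears exactly k times and no other part is repeated. *)
definition D_parts :: "nat \<Rightarrow> nat \<Rightarrow> nat multiset set" where
  "D_parts k n = {p. p \<noteq> {#} \<and> sum_mset p = n
      \<and> count p (Min (set_mset p)) = k
      \<and> (\<forall>x \<in># p. x \<noteq> Min (set_mset p) \<longrightarrow> count p x = 1)}"

definition parts_above_min :: "nat multiset \<Rightarrow> nat" where
  "parts_above_min p = size (filter_mset (\<lambda>x. Min (set_mset p) < x) p)"

definition D_e :: "nat \<Rightarrow> nat \<Rightarrow> nat" where
  "D_e k n = card {p \<in> D_parts k n. even (parts_above_min p)}"

definition D_o :: "nat \<Rightarrow> nat \<Rightarrow> nat" where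
  "D_o k n = card {p \<in> D_parts k n. odd (parts_above_min p)}"

definition P_e :: "nat \<Rightarrow> nat \<Rightarrow> nat" where
  "P_e k n = card {S. S \<subseteq> {1..k-1} \<and> \<Sum>S = n \<and> even (card S)}"

definition P_o :: "nat \<Rightarrow> nat \<Rightarrow> nat" where
  "P_o k n = card {S. S \<subseteq> {1..k-1} \<and> \<Sum>S = n \<and> odd (card S)}"

end

theory Submission
  imports Defs "HOL-Computational_Algebra.Formal_Power_Series"
begin

(*
  Splitting off the k copies of the smallest part s, a partition counted by D_k(n) is a pair
  (s, T) with T a set of parts above s and k s + sum T = n, signed by (-1)^|T|. Hence
  D_k^e(n) - D_k^o(n) is the coefficient of q^n in F_k = sum_s q^(k s) prod_(j>s) (1 - q^j).
  Telescoping gives F_1 = 1 and F_(k+1) = (1 - q^k) F_k up to terms of degree > n, so the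
  difference is the coefficient of q^n in prod_(j=1)^(k-1) (1 - q^j). Expanding the product,
  this coefficient is P_e - P_o and vanishes beyond degree k(k-1)/2; in degrees below k it
  agrees with Euler's pentagonal series, by Shanks' finite form of the pentagonal theorem.
*)

unbundle fps_syntax

lemma coeff_prod_one_minus_X_power:
  fixes A :: "nat set"
  assumes "finite A"
  shows "(\<Prod>j\<in>A. 1 - fps_X ^ j :: int fps) $ n = (\<Sum>S | S \<subseteq> A \<and> \<Sum>S = n. (-1) ^ card S)"
proof -
  have signed_monomial: "(\<Prod>j\<in>S. - (fps_X ^ j) :: int fps) = fps_const ((-1) ^ card S) * fps_X ^ (\<Sum>S)"
    for S :: "nat set"
    by (simp add: prod_uminus power_sum flip: fps_const_power fps_const_neg)
  have "(\<Prod>j\<in>A. 1 - fps_X ^ j :: int fps) = (\<Sum>S\<in>Pow A. \<Prod>j\<in>S. - (fps_X ^ j))"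
    using prod_add[OF assms, of "\<lambda>j. - (fps_X ^ j)" "\<lambda>_. 1"]
    by (simp add: diff_conv_add_uminus add.commute del: add_uminus_conv_diff)
  also have "\<dots> = (\<Sum>S\<in>Pow A. fps_const ((-1) ^ card S) * fps_X ^ (\<Sum>S))"
    by (simp only: signed_monomial)
  finally have expansion: "(\<Prod>j\<in>A. 1 - fps_X ^ j :: int fps)
      = (\<Sum>S\<in>Pow A. fps_const ((-1) ^ card S) * fps_X ^ (\<Sum>S))" .
  have "(\<Prod>j\<in>A. 1 - fps_X ^ j :: int fps) $ n
      = (\<Sum>S\<in>Pow A. fps_const ((-1) ^ card S) * fps_X ^ (\<Sum>S)) $ n"
    by (simp only: expansion)
  also have "\<dots> = (\<Sum>S\<in>Pow A. if \<Sum>S = n then (-1) ^ card S else 0)"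
    unfolding fps_sum_nth by (intro sum.cong refl) (simp only: fps_mult_left_const_nth fps_X_power_nth, simp)
  also have "\<dots> = (\<Sum>S \<in> {S \<in> Pow A. \<Sum>S = n}. (-1) ^ card S)"
    by (rule sum.inter_filter[symmetric]) (simp add: assms)
  also have "{S \<in> Pow A. \<Sum>S = n} = {S. S \<subseteq> A \<and> \<Sum>S = n}"
    by auto
  finally show ?thesis .
qed

lemma coeff_prod_one_minus_X_power_eq_0:
  fixes A :: "nat set"
  assumes "finite A" "\<Sum>A < n"
  shows "(\<Prod>j\<in>A. 1 - fps_X ^ j :: int fps) $ n = 0"
proof -
  have "\<Sum>S \<le> \<Sum>A" if "S \<subseteq> A" for S :: "nat set"
    using sum_mono2[OF assms(1) that, of "\<lambda>x. x"] by simp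
  then have no_subsets: "{S. S \<subseteq> A \<and> \<Sum>S = n} = {}"
    using assms(2) by (metis (mono_tags, lifting) empty_Collect_eq not_le)
  show ?thesis
    unfolding coeff_prod_one_minus_X_power[OF assms(1)] no_subsets by simp
qed

lemma coeff_prod_atLeastAtMost_eq_0:
  assumes "k * (k - 1) < 2 * n"
  shows "(\<Prod>j\<in>{1..k-1}. 1 - fps_X ^ j :: int fps) $ n = 0"
proof (rule coeff_prod_one_minus_X_power_eq_0)
  have "\<Sum>{1..k-1} = (k - 1) * k div 2"
    using Sum_Icc_nat[of 1 "k - 1"] by (cases k) simp_all
  then show "\<Sum>{1..k-1} < n"
    using assms by (simp add: div_less_iff_less_mult mult.commute)
qed simp

lemma signed_card_parity:
  assumes "finite A"
  shows "int (card {x\<in>A. even (f x)}) - int (card {x\<in>A. odd (f x)}) = (\<Sum>x\<in>A. (-1) ^ f x)"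
proof -
  have "(\<Sum>x\<in>A. (-1::int) ^ f x) = (\<Sum>x\<in>A. (if even (f x) then 1 else 0) - (if odd (f x) then 1 else 0))"
    by (intro sum.cong) auto
  also have "\<dots> = int (card {x\<in>A. even (f x)}) - int (card {x\<in>A. odd (f x)})"
    using assms by (simp add: sum_subtractf sum.inter_filter[symmetric])
  finally show ?thesis ..
qed

(* Indexing by m :: int covers both m(3m - 1)/2 and m(3m + 1)/2 = pentagonal (-m). *)
definition pentagonal :: "int \<Rightarrow> nat" where
  "pentagonal m = nat (m * (3 * m - 1) div 2)"

lemma pentagonal_double: "2 * int (pentagonal m) = m * (3 * m - 1)"
proof -
  have "even (m * (3 * m - 1))"
    by (auto simp: even_mult_iff)
  moreover have "0 \<le> m * (3 * m - 1)"
    by (cases "m \<ge> 1") (auto simp: zero_le_mult_iff)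
  ultimately show ?thesis
    unfolding pentagonal_def by simp
qed

lemma pentagonal_eq_iff_double: "pentagonal m = n \<longleftrightarrow> m * (3 * m - 1) = 2 * int n"
  using pentagonal_double[of m] by linarith

lemma pentagonal_eq_iff: "pentagonal a = pentagonal b \<longleftrightarrow> a = b"
proof
  assume "pentagonal a = pentagonal b"
  then have "(a - b) * (3 * (a + b) - 1) = 0"
    using pentagonal_double[of a] pentagonal_double[of b] by (simp add: algebra_simps)
  moreover have "3 * (a + b) - 1 \<noteq> 0"
    by presburger
  ultimately show "a = b"
    by simp
qed simp

lemma abs_le_pentagonal: "nat \<bar>m\<bar> \<le> pentagonal m"
proof -
  have "\<bar>m\<bar> \<le> m * m"
  proof (cases "m = 0")
    case False
    then have "1 * \<bar>m\<bar> \<le> \<bar>m\<bar> * \<bar>m\<bar>"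
      by (intro mult_right_mono) auto
    then show ?thesis
      by (simp add: abs_mult_self_eq)
  qed simp
  moreover have "m * (3 * m - 1) = 3 * (m * m) - m"
    by (simp add: algebra_simps)
  ultimately show ?thesis
    using pentagonal_double[of m] by linarith
qed

(* Shanks: sum_(k<=N) (-1)^k q^(N k + k(k+1)/2) prod_(j=k+1..N) (1 - q^j)
     = sum_(|m|<=N) (-1)^m q^(m(3m-1)/2). *)
definition shanks_term :: "nat \<Rightarrow> nat \<Rightarrow> int fps" where
  "shanks_term N k =
     fps_const ((-1) ^ k) * fps_X ^ (N * k + k * (k + 1) div 2) * (\<Prod>j\<in>{k<..N}. 1 - fps_X ^ j)"

definition shanks_telescope :: "nat \<Rightarrow> nat \<Rightarrow> int fps" where
  "shanks_telescope N k =
     fps_const ((-1) ^ k) * fps_X ^ (N * k + k * (k + 1) div 2) * (\<Prod>j\<in>{k..N}. 1 - fps_X ^ j)"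

lemma triangular_Suc: "Suc k * (Suc k + 1) div 2 = k * (k + 1) div 2 + Suc k"
proof -
  have "Suc k * (Suc k + 1) = k * (k + 1) + 2 * Suc k"
    by simp
  then show ?thesis
    by simp
qed

lemma shanks_term_Suc:
  assumes "k \<le> N"
  shows "shanks_term (Suc N) k = shanks_term N k + (shanks_telescope N (Suc k) - shanks_telescope N k)"
proof -
  define c where "c = fps_const ((-1) ^ k) * fps_X ^ (N * k + k * (k + 1) div 2)
                        * (\<Prod>j\<in>{k<..N}. 1 - fps_X ^ j :: int fps)"
  have "{k<..Suc N} = insert (Suc N) {k<..N}" "{k..N} = insert k {k<..N}" "{Suc k..N} = {k<..N}"
    using assms by auto
  then have "shanks_term (Suc N) k = c * fps_X ^ k * (1 - fps_X ^ Suc N)"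
    and "shanks_term N k = c"
    and "shanks_telescope N (Suc k) = - c * fps_X ^ (Suc N + k)"
    and "shanks_telescope N k = c * (1 - fps_X ^ k)"
    unfolding shanks_term_def shanks_telescope_def c_def triangular_Suc
    by (simp_all add: power_add algebra_simps flip: fps_const_neg)
  then show ?thesis
    by (simp add: power_add algebra_simps)
qed

lemma pentagonal_eq_shanks_exponent:
  "pentagonal (int (Suc N)) = N * Suc N + Suc N * (Suc N + 1) div 2"
  "pentagonal (- int (Suc N)) = Suc N * Suc N + Suc N * (Suc N + 1) div 2"
proof -
  have "2 * (Suc N * (Suc N + 1) div 2) = Suc N * (Suc N + 1)"
    by simp
  then have "2 * int (Suc N * (Suc N + 1) div 2) = int (Suc N) * (int (Suc N) + 1)"
    by (metis of_nat_1 of_nat_add of_nat_mult of_nat_numeral)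
  then show "pentagonal (int (Suc N)) = N * Suc N + Suc N * (Suc N + 1) div 2"
    and "pentagonal (- int (Suc N)) = Suc N * Suc N + Suc N * (Suc N + 1) div 2"
    unfolding pentagonal_eq_iff_double by (simp_all add: algebra_simps)
qed

lemma shanks_identity:
  "(\<Sum>k\<le>N. shanks_term N k) = (\<Sum>m\<in>{-int N..int N}. fps_const ((-1) ^ nat \<bar>m\<bar>) * fps_X ^ pentagonal m)"
proof (induction N)
  case 0
  show ?case
    by (simp add: shanks_term_def pentagonal_def)
next
  case (Suc N)
  define g :: "int \<Rightarrow> int fps" where "g m = fps_const ((-1) ^ nat \<bar>m\<bar>) * fps_X ^ pentagonal m" for m
  have "(\<Sum>k\<le>Suc N. shanks_term (Suc N) k)
      = (\<Sum>k\<le>N. shanks_term N k) + (\<Sum>k\<le>N. shanks_telescope N (Suc k) - shanks_telescope N k)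
        + shanks_term (Suc N) (Suc N)"
    by (simp add: shanks_term_Suc sum.distrib)
  also have "(\<Sum>k\<le>N. shanks_telescope N (Suc k) - shanks_telescope N k)
      = shanks_telescope N (Suc N) - shanks_telescope N 0"
    by (simp add: lessThan_Suc_atMost[symmetric] sum_lessThan_telescope del: sum.lessThan_Suc)
  also have "shanks_telescope N 0 = 0"
    by (auto simp: shanks_telescope_def prod_zero_iff intro!: bexI[of _ 0])
  also have "shanks_telescope N (Suc N) = g (int (Suc N))"
    unfolding shanks_telescope_def g_def pentagonal_eq_shanks_exponent by (simp del: of_nat_Suc)
  also have "shanks_term (Suc N) (Suc N) = g (- int (Suc N))"
    unfolding shanks_term_def g_def pentagonal_eq_shanks_exponent by (simp del: of_nat_Suc)
  also have "(\<Sum>k\<le>N. shanks_term N k) + (g (int (Suc N)) - 0) + g (- int (Suc N))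
      = (\<Sum>m\<in>insert (int (Suc N)) (insert (- int (Suc N)) {-int N..int N}). g m)"
    using Suc.IH by (simp add: g_def algebra_simps)
  also have "insert (int (Suc N)) (insert (- int (Suc N)) {-int N..int N}) = {-int (Suc N)..int (Suc N)}"
    by auto
  finally show ?case
    unfolding g_def .
qed

lemma coeff_euler_product:
  assumes "n \<le> N"
  shows "(\<Prod>j\<in>{1..N}. 1 - fps_X ^ j :: int fps) $ n
           = (\<Sum>m\<in>{-int N..int N}. if pentagonal m = n then (-1) ^ nat \<bar>m\<bar> else 0)"
proof -
  have "shanks_term N (Suc k) $ n = 0" for k
  proof -
    have "n < N * Suc k + Suc k * (Suc k + 1) div 2"
      using assms by (simp add: triangular_Suc)
    then show ?thesis
      unfolding shanks_term_def mult.assoc fps_mult_left_const_nth fps_X_power_mult_nth by simp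
  qed
  moreover have "shanks_term N 0 = (\<Prod>j\<in>{1..N}. 1 - fps_X ^ j)"
    by (simp add: shanks_term_def atLeastSucAtMost_greaterThanAtMost)
  ultimately have "(\<Prod>j\<in>{1..N}. 1 - fps_X ^ j :: int fps) $ n = (\<Sum>k\<le>N. shanks_term N k) $ n"
    unfolding sum.atMost_shift by (simp add: fps_sum_nth)
  also have "\<dots> = (\<Sum>m\<in>{-int N..int N}. fps_const ((-1) ^ nat \<bar>m\<bar>) * fps_X ^ pentagonal m) $ n"
    by (simp only: shanks_identity)
  also have "\<dots> = (\<Sum>m\<in>{-int N..int N}. if pentagonal m = n then (-1) ^ nat \<bar>m\<bar> else 0)"
    unfolding fps_sum_nth by (intro sum.cong refl) (simp only: fps_mult_left_const_nth fps_X_power_nth, simp)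
  finally show ?thesis .
qed

lemma coeff_euler_product_pentagonal:
  assumes "pentagonal m \<le> N"
  shows "(\<Prod>j\<in>{1..N}. 1 - fps_X ^ j :: int fps) $ pentagonal m = (-1) ^ nat \<bar>m\<bar>"
proof -
  have "m \<in> {-int N..int N}"
    using abs_le_pentagonal[of m] assms by auto
  then show ?thesis
    unfolding coeff_euler_product[OF assms] pentagonal_eq_iff by simp
qed

lemma coeff_euler_product_generalized_pentagonal:
  assumes "n \<le> N" "2 * int n = m * (3 * m + 1) \<or> 2 * int n = m * (3 * m - 1)"
  shows "(\<Prod>j\<in>{1..N}. 1 - fps_X ^ j :: int fps) $ n = (-1) ^ nat \<bar>m\<bar>"
proof -
  from assms(2) consider "pentagonal (- m) = n" | "pentagonal m = n"
    unfolding pentagonal_eq_iff_double by (auto simp: algebra_simps)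
  then show ?thesis
    using coeff_euler_product_pentagonal[of _ N] assms(1) by cases fastforce+
qed

lemma coeff_euler_product_non_pentagonal:
  assumes "n \<le> N" "\<forall>m. pentagonal m \<noteq> n"
  shows "(\<Prod>j\<in>{1..N}. 1 - fps_X ^ j :: int fps) $ n = 0"
  unfolding coeff_euler_product[OF assms(1)] using assms(2) by simp

definition join_min_part :: "nat \<Rightarrow> nat \<times> nat set \<Rightarrow> nat multiset" where
  "join_min_part k = (\<lambda>(s, T). replicate_mset k s + mset_set T)"

definition split_min_part :: "nat multiset \<Rightarrow> nat \<times> nat set" where
  "split_min_part p = (Min (set_mset p), set_mset p - {Min (set_mset p)})"

definition min_part_pairs :: "nat \<Rightarrow> nat \<Rightarrow> (nat \<times> nat set) set" where
  "min_part_pairs k n = (SIGMA s:{..n}. {T. T \<subseteq> {s<..n} \<and> k * s + \<Sum>T = n})"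

lemma sum_mset_join_min_part:
  assumes "finite T"
  shows "sum_mset (join_min_part k (s, T)) = k * s + \<Sum>T"
proof -
  have "sum_mset (mset_set T) = \<Sum>T"
    using assms by (induction T rule: finite_induct) auto
  then show ?thesis
    by (simp add: join_min_part_def)
qed

lemma join_min_part:
  assumes "1 \<le> k" "finite T" "\<forall>t\<in>T. s < t"
  shows "join_min_part k (s, T) \<in> D_parts k (k * s + \<Sum>T)"
    and "split_min_part (join_min_part k (s, T)) = (s, T)"
    and "parts_above_min (join_min_part k (s, T)) = card T"
proof -
  let ?p = "join_min_part k (s, T)"
  have set_p: "set_mset ?p = insert s T"
    using assms by (auto simp: join_min_part_def)
  have min_p: "Min (set_mset ?p) = s"
    unfolding set_p using assms by (intro Min_eqI) auto
  have "s \<notin> T"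
    using assms by auto
  then show "?p \<in> D_parts k (k * s + \<Sum>T)"
    unfolding D_parts_def mem_Collect_eq min_p sum_mset_join_min_part[OF assms(2)]
    using assms by (auto simp: join_min_part_def)
  show "split_min_part ?p = (s, T)"
    unfolding split_min_part_def min_p using set_p \<open>s \<notin> T\<close> by simp
  have "filter_mset (\<lambda>x. s < x) ?p = mset_set T"
    using assms by (intro multiset_eqI) (auto simp: join_min_part_def count_mset_set')
  then show "parts_above_min ?p = card T"
    unfolding parts_above_min_def min_p by simp
qed

lemma split_min_part:
  assumes "p \<in> D_parts k n"
  shows "join_min_part k (split_min_part p) = p"
    and "split_min_part p \<in> min_part_pairs k n"
proof -
  define s where "s = Min (set_mset p)"
  define T where "T = set_mset p - {s}"
  have "p \<noteq> {#}" and sum_p: "sum_mset p = n" and count_s: "count p s = k"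
    and count_other: "\<And>x. x \<in># p \<Longrightarrow> x \<noteq> s \<Longrightarrow> count p x = 1"
    using assms unfolding D_parts_def s_def by auto
  then have "s \<in># p"
    unfolding s_def by (simp add: Min_in)
  have T_above: "\<forall>t\<in>T. s < t"
    unfolding T_def s_def by (auto simp: order.not_eq_order_implies_strict)
  show join_split: "join_min_part k (split_min_part p) = p"
    unfolding split_min_part_def join_min_part_def s_def[symmetric]
    by (intro multiset_eqI) (auto simp: count_mset_set' count_s count_other not_in_iff)
  have "k * s + \<Sum>T = n"
    using sum_mset_join_min_part[of T k s] join_split sum_p
    by (simp add: T_def split_min_part_def s_def)
  moreover have "T \<subseteq> {..n}"
    using sum_p unfolding T_def by (auto dest!: multi_member_split)
  ultimately show "split_min_part p \<in> min_part_pairs k n"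
    using \<open>s \<in># p\<close> T_above sum_p
    unfolding split_min_part_def min_part_pairs_def s_def[symmetric] T_def[symmetric]
    by (auto dest!: multi_member_split)
qed

lemma min_part_pairsD:
  assumes "(s, T) \<in> min_part_pairs k n"
  shows "finite T" "\<forall>t\<in>T. s < t" "k * s + \<Sum>T = n"
  using assms finite_subset[of T "{s<..n}"] by (auto simp: min_part_pairs_def)

lemma bij_betw_join_min_part:
  assumes "1 \<le> k"
  shows "bij_betw (join_min_part k) (min_part_pairs k n) (D_parts k n)"
proof (rule bij_betw_byWitness[where f' = split_min_part])
  show "\<forall>a\<in>min_part_pairs k n. split_min_part (join_min_part k a) = a"
    using join_min_part(2)[OF assms min_part_pairsD(1,2)] by auto
  show "join_min_part k ` min_part_pairs k n \<subseteq> D_parts k n"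
    using join_min_part(1)[OF assms min_part_pairsD(1,2)] min_part_pairsD(3) by fastforce
  show "\<forall>p\<in>D_parts k n. join_min_part k (split_min_part p) = p"
    using split_min_part(1) by blast
  show "split_min_part ` D_parts k n \<subseteq> min_part_pairs k n"
    using split_min_part(2) by blast
qed

lemma signed_D_parts:
  assumes "1 \<le> k"
  shows "int (D_e k n) - int (D_o k n) = (\<Sum>s\<le>n. \<Sum>T | T \<subseteq> {s<..n} \<and> k * s + \<Sum>T = n. (-1) ^ card T)"
proof -
  have finite_fibres: "\<forall>s\<in>{..n}. finite {T. T \<subseteq> {s<..n} \<and> k * s + \<Sum>T = n}"
    by auto
  then have "finite (min_part_pairs k n)"
    unfolding min_part_pairs_def by (intro finite_SigmaI) auto
  then have "finite (D_parts k n)"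
    using bij_betw_finite bij_betw_join_min_part[OF assms] by blast
  then have "int (D_e k n) - int (D_o k n) = (\<Sum>p\<in>D_parts k n. (-1) ^ parts_above_min p)"
    unfolding D_e_def D_o_def by (rule signed_card_parity)
  also have "\<dots> = (\<Sum>a\<in>min_part_pairs k n. (-1) ^ parts_above_min (join_min_part k a))"
    by (rule sum.reindex_bij_betw[OF bij_betw_join_min_part[OF assms], symmetric])
  also have "\<dots> = (\<Sum>(s, T)\<in>min_part_pairs k n. (-1) ^ card T)"
  proof (intro sum.cong refl, clarify)
    fix s T
    assume "(s, T) \<in> min_part_pairs k n"
    then show "(-1) ^ parts_above_min (join_min_part k (s, T)) = (-1 :: int) ^ card T"
      using join_min_part(3)[OF assms min_part_pairsD(1,2)] by simp
  qed
  also have "\<dots> = (\<Sum>s\<le>n. \<Sum>T | T \<subseteq> {s<..n} \<and> k * s + \<Sum>T = n. (-1) ^ card T)"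
    unfolding min_part_pairs_def by (rule sum.Sigma[symmetric]) (use finite_fibres in auto)
  finally show ?thesis .
qed

(* F_k of the header with s, j <= N; it agrees with F_k up to degree N. *)
definition min_part_series :: "nat \<Rightarrow> nat \<Rightarrow> int fps" where
  "min_part_series N k = (\<Sum>s\<le>N. fps_X ^ (k * s) * (\<Prod>j\<in>{s<..N}. 1 - fps_X ^ j))"

lemma coeff_min_part_series_self:
  "min_part_series n k $ n = (\<Sum>s\<le>n. \<Sum>T | T \<subseteq> {s<..n} \<and> k * s + \<Sum>T = n. (-1) ^ card T)"
proof -
  have "(fps_X ^ (k * s) * (\<Prod>j\<in>{s<..n}. 1 - fps_X ^ j) :: int fps) $ n
      = (\<Sum>T | T \<subseteq> {s<..n} \<and> k * s + \<Sum>T = n. (-1) ^ card T)" for s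
  proof (cases "k * s \<le> n")
    case True
    have "(fps_X ^ (k * s) * (\<Prod>j\<in>{s<..n}. 1 - fps_X ^ j)) $ n
        = (\<Prod>j\<in>{s<..n}. 1 - fps_X ^ j :: int fps) $ (n - k * s)"
      using True by (simp add: fps_X_power_mult_nth)
    also have "\<dots> = (\<Sum>T | T \<subseteq> {s<..n} \<and> \<Sum>T = n - k * s. (-1) ^ card T)"
      by (rule coeff_prod_one_minus_X_power) simp
    also have "\<dots> = (\<Sum>T | T \<subseteq> {s<..n} \<and> k * s + \<Sum>T = n. (-1) ^ card T)"
      using True by (intro sum.cong) auto
    finally show ?thesis .
  next
    case False
    then have "{T. T \<subseteq> {s<..n} \<and> k * s + \<Sum>T = n} = {}"
      by auto
    then show ?thesis
      using False unfolding fps_X_power_mult_nth by simp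
  qed
  then show ?thesis
    unfolding min_part_series_def fps_sum_nth by simp
qed

lemma min_part_series_one: "min_part_series N 1 = 1"
proof -
  define Q :: "nat \<Rightarrow> int fps" where "Q s = (\<Prod>j\<in>{s<..N}. 1 - fps_X ^ j)" for s
  have "Q s = (1 - fps_X ^ Suc s) * Q (Suc s)" if "s < N" for s
    using that by (simp add: Q_def prod.atLeast_Suc_atMost flip: atLeastSucAtMost_greaterThanAtMost)
  then have "(\<Sum>s<N. fps_X ^ Suc s * Q (Suc s)) = (\<Sum>s<N. Q (Suc s) - Q s)"
    by (intro sum.cong) (auto simp: algebra_simps)
  also have "\<dots> = Q N - Q 0"
    by (rule sum_lessThan_telescope)
  finally have "min_part_series N 1 = Q N"
    unfolding min_part_series_def Q_def[symmetric] by (simp add: sum.atMost_shift)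
  then show ?thesis
    by (simp add: Q_def)
qed

lemma min_part_series_Suc:
  "min_part_series N (Suc k) = (1 - fps_X ^ k) * min_part_series N k + fps_X ^ (k * Suc N)"
proof -
  define Q :: "nat \<Rightarrow> int fps" where "Q s = (\<Prod>j\<in>{s<..N}. 1 - fps_X ^ j)" for s
  define c where "c s = fps_X ^ (k * s) * Q s" for s
  define d where "d s = fps_X ^ (Suc k * s) * Q s" for s
  have "fps_X ^ k * c s = c (Suc s) - d (Suc s)" if "s < N" for s
  proof -
    have Q_s: "Q s = (1 - fps_X ^ Suc s) * Q (Suc s)"
      using that by (simp add: Q_def prod.atLeast_Suc_atMost flip: atLeastSucAtMost_greaterThanAtMost)
    show ?thesis
      unfolding c_def d_def Q_s by (simp add: power_add algebra_simps)
  qed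
  then have "(\<Sum>s<N. fps_X ^ k * c s) = (\<Sum>s<N. c (Suc s) - d (Suc s))"
    by (intro sum.cong) auto
  then have "fps_X ^ k * min_part_series N k = (\<Sum>s<N. c (Suc s) - d (Suc s)) + fps_X ^ k * c N"
    unfolding min_part_series_def Q_def[symmetric] c_def[symmetric] lessThan_Suc_atMost[symmetric]
    by (simp add: sum_distrib_left distrib_left)
  moreover have "min_part_series N k = c 0 + (\<Sum>s<N. c (Suc s))"
    unfolding min_part_series_def Q_def[symmetric] c_def[symmetric] by (rule sum.atMost_shift)
  moreover have "min_part_series N (Suc k) = d 0 + (\<Sum>s<N. d (Suc s))"
    unfolding min_part_series_def Q_def[symmetric] d_def[symmetric] by (rule sum.atMost_shift)
  moreover have "c 0 = d 0" "fps_X ^ k * c N = fps_X ^ (k * Suc N)"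
    by (simp_all add: c_def d_def Q_def power_add)
  ultimately show ?thesis
    by (simp add: sum_subtractf algebra_simps)
qed

lemma X_power_dvd_min_part_series_diff:
  assumes "1 \<le> k"
  shows "fps_X ^ Suc N dvd min_part_series N k - (\<Prod>j\<in>{1..k-1}. 1 - fps_X ^ j)"
  using assms
proof (induction k rule: dec_induct)
  case base
  show ?case
    using min_part_series_one[of N] by simp
next
  case (step k)
  have "{1..Suc k - 1} = insert k {1..k-1}"
    using step(1) by auto
  then have prod: "(\<Prod>j\<in>{1..Suc k - 1}. 1 - fps_X ^ j :: int fps)
      = (1 - fps_X ^ k) * (\<Prod>j\<in>{1..k-1}. 1 - fps_X ^ j)"
    by (simp only:) (rule prod.insert, auto)
  have "fps_X ^ Suc N dvd (fps_X ^ (k * Suc N) :: int fps)"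
    using step(1) mult_le_mono1[of 1 k "Suc N"] by (intro le_imp_power_dvd) simp
  then have "fps_X ^ Suc N dvd (1 - fps_X ^ k) * (min_part_series N k - (\<Prod>j\<in>{1..k-1}. 1 - fps_X ^ j))
      + fps_X ^ (k * Suc N)"
    using step.IH by (intro dvd_add dvd_mult) auto
  moreover have "min_part_series N (Suc k) - (\<Prod>j\<in>{1..Suc k - 1}. 1 - fps_X ^ j)
      = (1 - fps_X ^ k) * (min_part_series N k - (\<Prod>j\<in>{1..k-1}. 1 - fps_X ^ j)) + fps_X ^ (k * Suc N)"
    unfolding min_part_series_Suc prod by (simp add: algebra_simps)
  ultimately show ?case
    by simp
qed

lemma coeff_min_part_series:
  assumes "1 \<le> k" "n \<le> N"
  shows "min_part_series N k $ n = (\<Prod>j\<in>{1..k-1}. 1 - fps_X ^ j) $ n"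
proof -
  obtain G where "min_part_series N k - (\<Prod>j\<in>{1..k-1}. 1 - fps_X ^ j) = fps_X ^ Suc N * G"
    using X_power_dvd_min_part_series_diff[OF assms(1), of N] by (elim dvdE)
  moreover have "(fps_X ^ Suc N * G) $ n = 0"
    unfolding fps_X_power_mult_nth using assms(2) by simp
  ultimately have "(min_part_series N k - (\<Prod>j\<in>{1..k-1}. 1 - fps_X ^ j)) $ n = 0"
    by (simp only:)
  then show ?thesis
    by simp
qed

lemma signed_D_parts_eq_coeff:
  assumes "1 \<le> k"
  shows "int (D_e k n) - int (D_o k n) = (\<Prod>j\<in>{1..k-1}. 1 - fps_X ^ j :: int fps) $ n"
  unfolding signed_D_parts[OF assms] coeff_min_part_series_self[symmetric]
  using coeff_min_part_series[OF assms order_refl] .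

lemma signed_P_eq_coeff:
  "int (P_e k n) - int (P_o k n) = (\<Prod>j\<in>{1..k-1}. 1 - fps_X ^ j :: int fps) $ n"
proof -
  let ?S = "{S. S \<subseteq> {1..k-1} \<and> \<Sum>S = n}"
  have "finite ?S"
    by (rule finite_subset[of _ "Pow {1..k-1}"]) auto
  then have "int (P_e k n) - int (P_o k n) = (\<Sum>S\<in>?S. (-1) ^ card S)"
    using signed_card_parity[of ?S card] unfolding P_e_def P_o_def by simp
  also have "\<dots> = (\<Prod>j\<in>{1..k-1}. 1 - fps_X ^ j :: int fps) $ n"
    by (rule coeff_prod_one_minus_X_power[symmetric]) simp
  finally show ?thesis .
qed

theorem theorem8:
  fixes k n :: nat
  assumes "k \<ge> 1" and "n \<ge> 1"
  shows "(\<forall>m::int. (1 \<le> n \<and> n \<le> k - 1 \<and>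
              (2 * int n = m * (3 * m + 1) \<or> 2 * int n = m * (3 * m - 1)))
            \<longrightarrow> int (D_e k n) - int (D_o k n) = (-1) ^ nat \<bar>m\<bar>)
       \<and> (k - 1 < n \<and> 2 * n \<le> k * (k - 1)
            \<longrightarrow> int (D_e k n) - int (D_o k n) = int (P_e k n) - int (P_o k n))
       \<and> ((\<not> (\<exists>m::int. 1 \<le> n \<and> n \<le> k - 1 \<and>
              (2 * int n = m * (3 * m + 1) \<or> 2 * int n = m * (3 * m - 1))))
          \<and> \<not> (k - 1 < n \<and> 2 * n \<le> k * (k - 1))
            \<longrightarrow> int (D_e k n) - int (D_o k n) = 0)"
proof -
  let ?c = "(\<Prod>j\<in>{1..k-1}. 1 - fps_X ^ j :: int fps) $ n"
  have D: "int (D_e k n) - int (D_o k n) = ?c"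
    using signed_D_parts_eq_coeff[OF assms(1)] .
  have non_pentagonal: "?c = 0"
    if "n \<le> k - 1" "\<not> (\<exists>m::int. 1 \<le> n \<and> n \<le> k - 1 \<and>
          (2 * int n = m * (3 * m + 1) \<or> 2 * int n = m * (3 * m - 1)))"
  proof (rule coeff_euler_product_non_pentagonal[OF that(1)])
    show "\<forall>m. pentagonal m \<noteq> n"
      using that assms(2) unfolding pentagonal_eq_iff_double by (auto dest: sym)
  qed
  show ?thesis
    using D non_pentagonal signed_P_eq_coeff[of k n] coeff_prod_atLeastAtMost_eq_0[of k n]
      coeff_euler_product_generalized_pentagonal[of n "k - 1"]
    by auto
qed

end
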